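(* In Zhu's algebra $A(M(1)^+)$ (writing $\omega$, $J$ for $[\omega]$, $[J]$ and products for $*$), $$J^2=p(\omega)+q(\omega)J,$$ where $p(x)=\frac{1816}{35}x^4-\frac{212}{5}x^3+\frac{89}{10}x^2-\frac{27}{70}x$ and $q(x)=-\frac{314}{35}x^2+\frac{89}{14}x-\frac{27}{70}$. Equivalently, $$(J+\omega-4\omega^2)(70J+908\omega^2-515\omega+27)=0.$$
   Context: Let $\mathfrak h=\mathbb C h$ with $\langle h,h\rangle=1$, Heisenberg algebra $[h(m),h(n)]=m\delta_{m+n,0}$. Let $M(1)=\mathbb C[h(-1),h(-2),\dots]\mathbf 1$ be the Heisenberg vertex operator algebra of central charge 1 (vacuum $\mathbf 1$, $Y(h(-1)\mathbf 1,z)=\sum_nh(n)z^{-n-1}$, vertex operators of monomials given by normally ordered products of derivatives of $h(z)$), with conformal vector $\omega=\frac12h(-1)^2\mathbf 1$. Let $\theta$ be the automorphism acting by $(-1)^k$ on monomials $h(-n_1)\cdots h(-n_k)\mathbf 1$ and $M(1)^+$ its fixed-point vertex operator subalgebra. Let $J=h(-1)^4\mathbf 1-2h(-3)h(-1)\mathbf 1+\frac32h(-2)^2\mathbf 1$. Zhu's algebra: for a vertex operator algebra $V$, homogeneous $u$ and $v\in V$ with $Y(u,z)=\sum u_nz^{-n-1}$, set $u*v=\sum_{i\ge0}\binom{\mathrm{wt}(u)}{i}u_{i-1}v$ and $u\circ v=\sum_{i\ge0}\binom{\mathrm{wt}(u)}{i}u_{i-2}v$; $O(V)$ is the span of all $u\circ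 v$, and $A(V)=V/O(V)$ is an associative algebra (with unit $[\mathbf 1]$) under the product induced by $*$; $[v]=v+O(V)$. *)

theory Defs
  imports Complex_Main "HOL-Library.Multiset" "HOL-Library.Function_Algebras"
begin

text \<open>A monomial h(-n_1)...h(-n_k)1 (all n_i \<ge> 1) is encoded by the multiset
  {#n_1,...,n_k#}. A vector of M(1) is a finitely supported complex-valued
  function on such multisets (its coordinates in the monomial basis).\<close>

type_synonym vec = "nat multiset \<Rightarrow> complex"

definition supp :: "vec \<Rightarrow> nat multiset set" where
  "supp v = {m. v m \<noteq> 0}"

definition smul :: "complex \<Rightarrow> vec \<Rightarrow> vec" where
  "smul c v = (\<lambda>x. c * v x)"

definition mono :: "nat multiset \<Rightarrow> vec" where
  "mono m = (\<lambda>x. if x = m then 1 else 0)"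

definition M1 :: "vec set" where
  "M1 = {v. finite (supp v) \<and> (\<forall>m\<in>supp v. 0 \<notin># m)}"

definition theta :: "vec \<Rightarrow> vec" where
  "theta v = (\<lambda>m. (-1) ^ size m * v m)"

definition M1plus :: "vec set" where
  "M1plus = {v \<in> M1. theta v = v}"

definition lin_ext :: "(nat multiset \<Rightarrow> vec) \<Rightarrow> vec \<Rightarrow> vec" where
  "lin_ext F v = (\<Sum>m\<in>supp v. smul (v m) (F m))"

text \<open>Heisenberg modes h(j): h(-n) (n>0) multiplies by h(-n); h(0) acts as 0;
  h(n) (n>0) acts as n d/dh(-n), so that [h(m),h(n)] = m delta_{m+n,0}.\<close>
definition hmode_basis :: "int \<Rightarrow> nat multiset \<Rightarrow> vec" where
  "hmode_basis j m =
     (if j < 0 then mono (m + {#nat (- j)#})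
      else if j = 0 then 0
      else smul (of_int j * of_nat (count m (nat j))) (mono (m - {#nat j#})))"

definition hmode :: "int \<Rightarrow> vec \<Rightarrow> vec" where
  "hmode j = lin_ext (hmode_basis j)"

definition apply_modes :: "int list \<Rightarrow> vec \<Rightarrow> vec" where
  "apply_modes js v = foldr hmode js v"

text \<open>Normally ordered product :h(j_1)...h(j_k): (creation modes to the left).\<close>
definition normal_apply :: "int list \<Rightarrow> vec \<Rightarrow> vec" where
  "normal_apply js v = apply_modes (filter (\<lambda>j. j < 0) js @ filter (\<lambda>j. 0 \<le> j) js) v"

text \<open>The divided derivative (1/(n-1)!) d^{n-1}/dz^{n-1} h(z)
  = sum_j binom(-j-1, n-1) h(j) z^{-j-n}.\<close>
definition mode_coeff :: "nat list \<Rightarrow> int list \<Rightarrow> complex" where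
  "mode_coeff ns js = prod_list (map2 (\<lambda>n j. (of_int (- j - 1) :: complex) gchoose (n - 1)) ns js)"

definition vo_term :: "nat list \<Rightarrow> int list \<Rightarrow> vec \<Rightarrow> vec" where
  "vo_term ns js v = smul (mode_coeff ns js) (normal_apply js v)"

text \<open>The mode u_n of Y(u,z) = sum_n u_n z^{-n-1} for the monomial
  u = h(-n_1)...h(-n_k)1, namely the coefficient of z^{-n-1} in
  :d^{(n_1-1)}h(z) ... d^{(n_k-1)}h(z): applied to v.  This is a finite sum
  (all but finitely many terms vanish); we sum exactly the nonzero terms.\<close>
definition vo_mono_mode :: "nat multiset \<Rightarrow> int \<Rightarrow> vec \<Rightarrow> vec" where
  "vo_mono_mode m n v =
     (let ns = sorted_list_of_multiset m in
      \<Sum>js \<in> {js. length js = length ns \<and>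
                 sum_list (map2 (\<lambda>a j. j + int a) ns js) = n + 1 \<and>
                 vo_term ns js v \<noteq> 0}. vo_term ns js v)"

definition vmode :: "vec \<Rightarrow> int \<Rightarrow> vec \<Rightarrow> vec" where
  "vmode u n v = (\<Sum>m\<in>supp u. smul (u m) (vo_mono_mode m n v))"

text \<open>Weight (L(0)-eigenvalue) of a monomial is n_1+...+n_k.\<close>
definition homogeneous :: "vec \<Rightarrow> bool" where
  "homogeneous u \<longleftrightarrow> (\<exists>w. \<forall>m\<in>supp u. sum_mset m = w)"

definition zstar :: "vec \<Rightarrow> vec \<Rightarrow> vec" where
  "zstar u v = (\<Sum>m\<in>supp u. smul (u m)
      (\<Sum>i\<le>sum_mset m. smul (of_nat (sum_mset m choose i)) (vo_mono_mode m (int i - 1) v)))"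

definition zcirc :: "vec \<Rightarrow> vec \<Rightarrow> vec" where
  "zcirc u v = (\<Sum>m\<in>supp u. smul (u m)
      (\<Sum>i\<le>sum_mset m. smul (of_nat (sum_mset m choose i)) (vo_mono_mode m (int i - 2) v)))"

inductive_set OV :: "vec set" where
  zero: "0 \<in> OV"
| step: "\<lbrakk>x \<in> OV; u \<in> M1plus; homogeneous u; v \<in> M1plus\<rbrakk>
           \<Longrightarrow> x + smul c (zcirc u v) \<in> OV"

definition vac :: vec where "vac = mono {#}"

definition omega :: vec where "omega = smul (1/2) (mono {#1, 1#})"

definition Jvec :: vec where
  "Jvec = mono {#1, 1, 1, 1#} - smul 2 (mono {#3, 1#}) + smul (3/2) (mono {#2, 2#})"

end

theory Submission
  imports Defs
begin

text \<open>Both relations are verified by exact computation. Vectors of M(1) with integer coefficients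
  are represented by lists of monomials, on which the Heisenberg modes, the modes u_n of the vertex
  operators of monomials u and the products * and \<circ> are implemented and proved to agree with
  their definitions; the rational coefficients binom(-j-1, n-1) of the divided derivatives of h(z)
  are made integral by the common denominator \<Prod>(n_i - 1)!. Only finitely many mode tuples
  contribute to u_n v (annihilation modes must hit parts of v, creation modes of a derivative of
  order n-1 are at most -n), and these are enumerated explicitly. Each side of the relations thus
  evaluates to a rational multiple of such a list, and membership in O(V) is certified by an
  explicit integer combination of products u \<circ> v of even monomials u and v.\<close>

section \<open>Scalar multiplication and linear extension\<close>

lemma smul_0 [simp]: "smul 0 v = 0"
  by (simp add: smul_def fun_eq_iff)

lemma smul_zero [simp]: "smul c 0 = 0"
  by (simp add: smul_def fun_eq_iff)

lemma smul_1 [simp]: "smul 1 v = v"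
  by (simp add: smul_def)

lemma smul_smul: "smul a (smul b v) = smul (a * b) v"
  by (simp add: smul_def fun_eq_iff)

lemma smul_add: "smul c (u + v) = smul c u + smul c v"
  by (simp add: smul_def fun_eq_iff algebra_simps)

lemma smul_add_left: "smul (a + b) v = smul a v + smul b v"
  by (simp add: smul_def fun_eq_iff algebra_simps)

lemma smul_eq_0_iff: "smul c v = 0 \<longleftrightarrow> c = 0 \<or> v = 0"
  by (auto simp: smul_def fun_eq_iff)

lemma smul_sum: "smul c (\<Sum>i\<in>A. f i) = (\<Sum>i\<in>A. smul c (f i))"
  by (induction A rule: infinite_finite_induct)
    (simp_all only: sum.infinite sum.empty sum.insert smul_zero smul_add simp_thms)

lemma smul_sum_list: "smul c (sum_list vs) = sum_list (map (smul c) vs)"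
  by (induction vs) (simp_all only: list.map sum_list.Nil sum_list.Cons smul_zero smul_add)

lemma supp_mono [simp]: "supp (mono m) = {m}"
  by (simp add: supp_def mono_def)

lemma supp_add_subset: "supp (u + v) \<subseteq> supp u \<union> supp v"
  by (auto simp: supp_def)

lemma supp_smul_subset: "supp (smul c v) \<subseteq> supp v"
  by (auto simp: supp_def smul_def)

lemma lin_ext_eq_sum_superset:
  assumes "finite S" "supp v \<subseteq> S"
  shows "lin_ext F v = (\<Sum>m\<in>S. smul (v m) (F m))"
  unfolding lin_ext_def
  by (rule sum.mono_neutral_left) (use assms in \<open>auto simp: supp_def\<close>)

lemma lin_ext_add:
  assumes "finite (supp u)" "finite (supp v)"
  shows "lin_ext F (u + v) = lin_ext F u + lin_ext F v"
proof -
  let ?S = "supp u \<union> supp v"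
  have "lin_ext F (u + v) = (\<Sum>m\<in>?S. smul (u m + v m) (F m))"
    using lin_ext_eq_sum_superset[OF _ supp_add_subset] assms by simp
  also have "\<dots> = (\<Sum>m\<in>?S. smul (u m) (F m)) + (\<Sum>m\<in>?S. smul (v m) (F m))"
    by (simp add: smul_add_left sum.distrib)
  also have "\<dots> = lin_ext F u + lin_ext F v"
    using assms by (simp add: lin_ext_eq_sum_superset[of ?S u] lin_ext_eq_sum_superset[of ?S v])
  finally show ?thesis .
qed

lemma lin_ext_smul: "lin_ext F (smul c v) = smul c (lin_ext F v)"
proof (cases "c = 0")
  case False
  then have "supp (smul c v) = supp v"
    by (simp add: supp_def smul_def)
  moreover have "smul c v m = c * v m" for m
    by (simp add: smul_def)
  ultimately show ?thesis
    by (simp only: lin_ext_def smul_sum smul_smul)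
qed (simp add: lin_ext_def supp_def)

lemma lin_ext_mono: "lin_ext F (mono m) = F m"
  unfolding lin_ext_def supp_mono by (simp add: mono_def)

lemma lin_ext_smul_mono: "lin_ext F (smul c (mono m)) = smul c (F m)"
  by (simp add: lin_ext_smul lin_ext_mono)

section \<open>Integer vectors as lists of monomials\<close>

text \<open>A term (ns, c) stands for c h(-n1)...h(-nk)1; the list ns need not be sorted.\<close>

type_synonym rep = "(nat list \<times> int) list"

definition vec_of :: "rep \<Rightarrow> vec" where
  "vec_of xs = sum_list (map (\<lambda>(ns, c). smul (of_int c) (mono (mset ns))) xs)"

lemma vec_of_Nil [simp]: "vec_of [] = 0"
  by (simp add: vec_of_def)

lemma vec_of_Cons: "vec_of ((ns, c) # xs) = smul (of_int c) (mono (mset ns)) + vec_of xs"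
  by (simp add: vec_of_def)

lemma vec_of_single: "vec_of [(ns, 1)] = mono (mset ns)"
  by (simp add: vec_of_Cons)

lemma vec_of_append: "vec_of (xs @ ys) = vec_of xs + vec_of ys"
  by (simp add: vec_of_def)

lemma vec_of_concat: "vec_of (concat xss) = sum_list (map vec_of xss)"
  by (induction xss) (simp_all add: vec_of_append)

lemma finite_supp_vec_of: "finite (supp (vec_of xs))"
proof (induction xs)
  case (Cons t xs)
  obtain ns c where "t = (ns, c)" by fastforce
  then have "supp (vec_of (t # xs)) \<subseteq> {mset ns} \<union> supp (vec_of xs)"
    using supp_add_subset supp_smul_subset by (fastforce simp: vec_of_Cons)
  then show ?case
    by (rule finite_subset) (simp add: Cons.IH)
qed (simp add: supp_def)

lemma lin_ext_vec_of:
  "lin_ext F (vec_of xs) = sum_list (map (\<lambda>(ns, c). smul (of_int c) (F (mset ns))) xs)"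
proof (induction xs)
  case (Cons t xs)
  obtain ns c where t: "t = (ns, c)" by fastforce
  have "finite (supp (smul (of_int c) (mono (mset ns))))"
    using supp_smul_subset by (rule finite_subset) simp
  then have "lin_ext F (vec_of (t # xs))
      = lin_ext F (smul (of_int c) (mono (mset ns))) + lin_ext F (vec_of xs)"
    by (simp only: t vec_of_Cons lin_ext_add finite_supp_vec_of)
  then show ?case
    using Cons.IH by (simp add: t lin_ext_smul_mono)
qed (simp add: lin_ext_def supp_def)

definition scale_rep :: "int \<Rightarrow> rep \<Rightarrow> rep" where
  "scale_rep k xs = map (\<lambda>(ns, c). (ns, k * c)) xs"

lemma vec_of_scale_rep: "vec_of (scale_rep k xs) = smul (of_int k) (vec_of xs)"
  by (simp add: scale_rep_def vec_of_def smul_sum_list o_def case_prod_beta smul_smul)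

fun add_term :: "nat list \<times> int \<Rightarrow> rep \<Rightarrow> rep" where
  "add_term t [] = [t]"
| "add_term (ns, c) ((ms, d) # xs) =
     (if ns = ms then (ns, c + d) # xs else (ms, d) # add_term (ns, c) xs)"

definition collect_rep :: "rep \<Rightarrow> rep" where
  "collect_rep xs = filter (\<lambda>(ns, c). c \<noteq> 0) (foldr add_term xs [])"

lemma vec_of_add_term: "vec_of (add_term t xs) = vec_of (t # xs)"
  by (induction t xs rule: add_term.induct) (auto simp: vec_of_Cons smul_add_left add_ac)

lemma vec_of_collect_rep: "vec_of (collect_rep xs) = vec_of xs"
proof -
  have "vec_of (filter (\<lambda>(ns, c). c \<noteq> 0) ys) = vec_of ys" for ys
    by (induction ys) (auto simp: vec_of_Cons)
  moreover have "vec_of (foldr add_term xs []) = vec_of xs"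
    by (induction xs) (auto simp: vec_of_add_term vec_of_Cons)
  ultimately show ?thesis
    by (simp add: collect_rep_def)
qed

section \<open>Heisenberg modes on lists of monomials\<close>

text \<open>For j = 0 the second branch yields the coefficient 0, as it should for h(0).\<close>

definition hmode_term :: "int \<Rightarrow> nat list \<times> int \<Rightarrow> rep" where
  "hmode_term j = (\<lambda>(ns, c).
     if j < 0 then [(insort (nat (- j)) ns, c)]
     else [(remove1 (nat j) ns, c * j * int (count_list ns (nat j)))])"

definition hmode_rep :: "int \<Rightarrow> rep \<Rightarrow> rep" where
  "hmode_rep j xs = concat (map (hmode_term j) xs)"

definition normal_apply_rep :: "int list \<Rightarrow> rep \<Rightarrow> rep" where
  "normal_apply_rep js xs = foldr hmode_rep (filter (\<lambda>j. j < 0) js @ filter (\<lambda>j. 0 \<le> j) js) xs"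

lemma vec_of_hmode_term: "vec_of (hmode_term j (ns, c)) = smul (of_int c) (hmode_basis j (mset ns))"
proof -
  have "count (mset ns) (nat j) = count_list ns (nat j)"
    by (simp add: count_mset)
  then show ?thesis
    by (auto simp: hmode_term_def hmode_basis_def vec_of_Cons smul_smul mult.assoc)
qed

lemma hmode_vec_of: "hmode j (vec_of xs) = vec_of (hmode_rep j xs)"
proof -
  have "hmode j (vec_of xs)
      = sum_list (map (\<lambda>(ns, c). smul (of_int c) (hmode_basis j (mset ns))) xs)"
    by (simp add: hmode_def lin_ext_vec_of)
  also have "\<dots> = sum_list (map (\<lambda>t. vec_of (hmode_term j t)) xs)"
    by (rule arg_cong[where f = sum_list], rule map_cong) (auto simp: vec_of_hmode_term)
  finally show ?thesis
    by (simp add: hmode_rep_def vec_of_concat o_def)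
qed

lemma normal_apply_vec_of: "normal_apply js (vec_of xs) = vec_of (normal_apply_rep js xs)"
proof -
  have "foldr hmode ks (vec_of xs) = vec_of (foldr hmode_rep ks xs)" for ks xs
    by (induction ks) (simp_all add: hmode_vec_of)
  then show ?thesis
    by (simp add: normal_apply_def apply_modes_def normal_apply_rep_def)
qed

lemma hmode_rep_append: "hmode_rep j (xs @ ys) = hmode_rep j xs @ hmode_rep j ys"
  by (simp add: hmode_rep_def)

lemma hmode_rep_scale_rep: "hmode_rep j (scale_rep k xs) = scale_rep k (hmode_rep j xs)"
  by (induction xs) (auto simp: hmode_rep_def scale_rep_def hmode_term_def algebra_simps)

lemma normal_apply_rep_append:
  "normal_apply_rep js (xs @ ys) = normal_apply_rep js xs @ normal_apply_rep js ys"
proof -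
  have "foldr hmode_rep ks (xs @ ys) = foldr hmode_rep ks xs @ foldr hmode_rep ks ys" for ks xs ys
    by (induction ks) (simp_all add: hmode_rep_append)
  then show ?thesis
    by (simp add: normal_apply_rep_def)
qed

lemma normal_apply_rep_scale_rep:
  "normal_apply_rep js (scale_rep k xs) = scale_rep k (normal_apply_rep js xs)"
proof -
  have "foldr hmode_rep ks (scale_rep k xs) = scale_rep k (foldr hmode_rep ks xs)" for ks xs
    by (induction ks) (simp_all add: hmode_rep_scale_rep)
  then show ?thesis
    by (simp add: normal_apply_rep_def)
qed

lemma normal_apply_rep_Nil [simp]: "normal_apply_rep js [] = []"
proof -
  have "foldr hmode_rep ks [] = []" for ks
    by (induction ks) (simp_all add: hmode_rep_def)
  then show ?thesis
    by (simp add: normal_apply_rep_def)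
qed

lemma vec_of_normal_apply_rep:
  "vec_of (normal_apply_rep js xs)
     = sum_list (map (\<lambda>(ns, c). smul (of_int c) (normal_apply js (mono (mset ns)))) xs)"
proof (induction xs)
  case (Cons t xs)
  obtain ns c where t: "t = (ns, c)" by fastforce
  have "normal_apply_rep js [(ns, c)] = scale_rep c (normal_apply_rep js [(ns, 1)])"
    using normal_apply_rep_scale_rep[of js c "[(ns, 1)]"] by (simp add: scale_rep_def)
  then have "vec_of (normal_apply_rep js [(ns, c)])
      = smul (of_int c) (normal_apply js (mono (mset ns)))"
    by (simp add: vec_of_scale_rep normal_apply_vec_of flip: vec_of_single)
  then show ?case
    using normal_apply_rep_append[of js "[(ns, c)]" xs] Cons.IH by (simp add: t vec_of_append)
qed simp

section \<open>Modes of the vertex operators of monomials\<close>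

fun falling_factorial :: "nat \<Rightarrow> int \<Rightarrow> int" where
  "falling_factorial 0 x = 1"
| "falling_factorial (Suc k) x = (x - int k) * falling_factorial k x"

definition mode_coeff_num :: "nat list \<Rightarrow> int list \<Rightarrow> int" where
  "mode_coeff_num ns js = prod_list (map2 (\<lambda>n j. falling_factorial (n - 1) (- j - 1)) ns js)"

definition mode_coeff_den :: "nat list \<Rightarrow> int" where
  "mode_coeff_den ns = prod_list (map (\<lambda>n. int (fact (n - 1))) ns)"

lemma gchoose_falling_factorial:
  "(of_int x :: complex) gchoose k = of_int (falling_factorial k x) / fact k"
proof -
  have "(\<Prod>i = 0..<k. (of_int x :: complex) - of_nat i) = of_int (falling_factorial k x)"
    by (induction k) (simp_all add: prod.atLeast0_lessThan_Suc algebra_simps)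
  then show ?thesis
    by (simp add: gbinomial_prod_rev)
qed

lemma mode_coeff_den_pos: "mode_coeff_den ns > 0"
  by (induction ns) (simp_all add: mode_coeff_den_def)

lemma mode_coeff_eq:
  "length ns = length js \<Longrightarrow>
     mode_coeff ns js = of_int (mode_coeff_num ns js) / of_int (mode_coeff_den ns)"
proof (induction ns js rule: list_induct2)
  case (Cons n ns j js)
  have "mode_coeff (n # ns) (j # js) = (of_int (- j - 1) gchoose (n - 1)) * mode_coeff ns js"
    by (simp add: mode_coeff_def)
  also have "\<dots> = of_int (falling_factorial (n - 1) (- j - 1)) / fact (n - 1)
      * (of_int (mode_coeff_num ns js) / of_int (mode_coeff_den ns))"
    by (simp only: gchoose_falling_factorial Cons.IH)
  finally show ?case
    by (simp add: mode_coeff_num_def mode_coeff_den_def)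
qed (simp add: mode_coeff_def mode_coeff_num_def mode_coeff_den_def)

lemma falling_factorial_eq_0: "0 \<le> x \<Longrightarrow> x < int k \<Longrightarrow> falling_factorial k x = 0"
proof (induction k)
  case (Suc k)
  then show ?case
    by (cases "x = int k") auto
qed simp

lemma mode_coeff_num_neq_0_imp:
  "length ns = length js \<Longrightarrow> mode_coeff_num ns js \<noteq> 0 \<Longrightarrow>
     list_all2 (\<lambda>n j. j < 0 \<longrightarrow> j \<le> - int n) ns js"
proof (induction ns js rule: list_induct2)
  case (Cons n ns j js)
  have "falling_factorial (n - 1) (- j - 1) \<noteq> 0" and "mode_coeff_num ns js \<noteq> 0"
    using Cons.prems by (auto simp: mode_coeff_num_def)
  then have "j < 0 \<longrightarrow> \<not> - j - 1 < int (n - 1)"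
    using falling_factorial_eq_0[of "- j - 1" "n - 1"] by auto
  then have "j < 0 \<longrightarrow> j \<le> - int n"
    by (cases n) auto
  with Cons show ?case
    by (simp add: \<open>mode_coeff_num ns js \<noteq> 0\<close>)
qed simp

text \<open>Candidates (j_1,...,j_k) with sum N for the factors n_1,...,n_k in ns, when acting on
  a monomial whose parts not yet annihilated form the list X with sum S: every positive mode
  removes a part of X, every negative mode satisfies j_i \<le> -n_i, and, as the positive
  modes still to come sum to at most S, no mode is smaller than N - S.\<close>

fun mode_tuples :: "nat list \<Rightarrow> int \<Rightarrow> nat list \<Rightarrow> int \<Rightarrow> int list list" where
  "mode_tuples [] N X S = (if N = 0 then [[]] else [])"
| "mode_tuples (n # ns) N X S =
     concat (map (\<lambda>p. map ((#) (int p)) (mode_tuples ns (N - int p) (remove1 p X) (S - int p)))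
       (remdups X))
   @ concat (map (\<lambda>j. map ((#) j) (mode_tuples ns (N - j) X S)) [N - S .. min (-1) (- int n)])"

lemma mode_tuples_sound:
  "js \<in> set (mode_tuples ns N X S) \<Longrightarrow> length js = length ns \<and> sum_list js = N"
  by (induction ns arbitrary: N X S js) (auto split: if_splits)

lemma sum_list_le_sum_pos: "sum_list js \<le> int (sum_list (map nat (filter (\<lambda>j. 0 < j) js)))"
  by (induction js) auto

lemma mode_tuples_complete:
  assumes "length js = length ns" "list_all2 (\<lambda>n j. j < 0 \<longrightarrow> j \<le> - int n) ns js"
    "0 \<notin> set js" "mset (map nat (filter (\<lambda>j. 0 < j) js)) \<subseteq># mset X"
    "sum_list js = N" "S = int (sum_list X)"
  shows "js \<in> set (mode_tuples ns N X S)"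
  using assms
proof (induction ns arbitrary: js N X S)
  case (Cons n ns)
  obtain j js' where js: "js = j # js'"
    using Cons.prems(1) by (cases js) auto
  have len: "length js' = length ns"
    and bound: "list_all2 (\<lambda>n j. j < 0 \<longrightarrow> j \<le> - int n) ns js'" "j < 0 \<longrightarrow> j \<le> - int n"
    and nz: "j \<noteq> 0" "0 \<notin> set js'"
    using Cons.prems(1-3) js by auto
  show ?case
  proof (cases "0 < j")
    case True
    have "add_mset (nat j) (mset (map nat (filter (\<lambda>j. 0 < j) js'))) \<subseteq># mset X"
      using Cons.prems(4) js True by simp
    then have jX: "nat j \<in> set X"
      and sub: "mset (map nat (filter (\<lambda>j. 0 < j) js')) \<subseteq># mset (remove1 (nat j) X)"
      by (auto simp: insert_subset_eq_iff)
    have "sum_list (remove1 (nat j) X) + nat j = sum_list X"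
      using jX by (induction X) auto
    then have "int (sum_list (remove1 (nat j) X)) = S - j"
      using True Cons.prems(6) by linarith
    then have "js' \<in> set (mode_tuples ns (N - j) (remove1 (nat j) X) (S - j))"
      using Cons.IH[OF len bound(1) nz(2) sub] Cons.prems(5) js by simp
    then show ?thesis
      using True jX js by force
  next
    case False
    then have neg: "j < 0"
      using nz by simp
    have sub: "mset (map nat (filter (\<lambda>j. 0 < j) js')) \<subseteq># mset X"
      using Cons.prems(4) js neg by simp
    have "sum_list js' \<le> int (sum_list (map nat (filter (\<lambda>j. 0 < j) js')))"
      by (rule sum_list_le_sum_pos)
    also have "\<dots> \<le> S"
      using mset_subset_eq_exists_conv[THEN iffD1, OF sub] Cons.prems(6)
      by (metis le_add1 of_nat_le_iff sum_mset.union sum_mset_sum_list)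
    finally have "N - S \<le> j"
      using Cons.prems(5) js by simp
    moreover have "js' \<in> set (mode_tuples ns (N - j) X S)"
      using Cons.IH[OF len bound(1) nz(2) sub] Cons.prems(5,6) js by simp
    ultimately show ?thesis
      using bound(2) neg js by auto
  qed
qed simp

lemma distinct_concat_map_Cons:
  assumes "distinct L" "inj_on h (set L)" "\<And>p. p \<in> set L \<Longrightarrow> distinct (g p)"
  shows "distinct (concat (map (\<lambda>p. map ((#) (h p)) (g p)) L))"
  using assms
proof (induction L)
  case (Cons p L)
  then show ?case
    by (auto simp: distinct_map inj_on_def)
qed simp

lemma distinct_mode_tuples: "distinct (mode_tuples ns N X S)"
proof (induction ns arbitrary: N X S)
  case (Cons n ns)
  have "distinct (concat (map (\<lambda>p. map ((#) (int p))
      (mode_tuples ns (N - int p) (remove1 p X) (S - int p))) (remdups X)))"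
    by (rule distinct_concat_map_Cons) (auto simp: inj_on_def Cons.IH)
  moreover have "distinct (concat (map (\<lambda>j. map ((#) j) (mode_tuples ns (N - j) X S))
      [N - S .. min (-1) (- int n)]))"
    by (rule distinct_concat_map_Cons[of _ "\<lambda>j. j", simplified]) (simp_all add: Cons.IH)
  ultimately show ?case
    by auto
qed simp

lemma hmode_zero [simp]: "hmode j 0 = 0"
  by (simp add: hmode_def lin_ext_def supp_def)

lemma foldr_hmode_zero [simp]: "foldr hmode js 0 = 0"
  by (induction js) (simp_all only: foldr.simps id_apply o_apply hmode_zero)

lemma foldr_hmode_smul: "foldr hmode js (smul c v) = smul c (foldr hmode js v)"
  by (induction js) (simp_all add: hmode_def lin_ext_smul)

lemma vo_term_smul: "vo_term ns js (smul c v) = smul c (vo_term ns js v)"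
  by (simp add: vo_term_def normal_apply_def apply_modes_def foldr_hmode_smul smul_smul mult.commute)

lemma vo_mono_mode_smul: "vo_mono_mode m n (smul c v) = smul c (vo_mono_mode m n v)"
proof (cases "c = 0")
  case True
  have "vo_term (sorted_list_of_multiset m) js 0 = 0" for js
    by (simp only: vo_term_def normal_apply_def apply_modes_def foldr_hmode_zero smul_zero)
  then show ?thesis
    by (simp add: True vo_mono_mode_def)
next
  case False
  then show ?thesis
    by (simp add: vo_mono_mode_def Let_def vo_term_smul smul_eq_0_iff smul_sum)
qed

lemma foldr_hmode_nonneg_mono:
  assumes "\<forall>p\<in>set ps. 0 \<le> p"
  shows "foldr hmode ps (mono X) = 0 \<or>
    (0 \<notin> set ps \<and> mset (map nat ps) \<subseteq># X \<and>
     (\<exists>c. foldr hmode ps (mono X) = smul c (mono (X - mset (map nat ps)))))"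
  using assms
proof (induction ps)
  case Nil
  show ?case
    by (intro disjI2 conjI exI[of _ 1]) simp_all
next
  case (Cons p ps)
  show ?case
  proof (cases "foldr hmode ps (mono X) = 0")
    case False
    then obtain c where ps: "0 \<notin> set ps" "mset (map nat ps) \<subseteq># X"
      and c: "foldr hmode ps (mono X) = smul c (mono (X - mset (map nat ps)))"
      using Cons by auto
    define Y where "Y = X - mset (map nat ps)"
    have step: "foldr hmode (p # ps) (mono X) = smul c (hmode_basis p Y)"
      by (simp add: c hmode_def lin_ext_smul_mono Y_def)
    show ?thesis
    proof (cases "0 < p \<and> nat p \<in># Y")
      case True
      then have "add_mset (nat p) (mset (map nat ps)) \<subseteq># X"
        using ps(2) by (auto simp: Y_def subseteq_mset_def in_diff_count)
      moreover have "foldr hmode (p # ps) (mono X)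
          = smul (c * (of_int p * of_nat (count Y (nat p)))) (mono (X - mset (map nat (p # ps))))"
        using True unfolding step by (simp add: hmode_basis_def smul_smul Y_def)
      ultimately show ?thesis
        using True ps(1) by (auto simp del: foldr.simps)
    next
      case False
      then have "hmode_basis p Y = 0"
        using Cons.prems by (auto simp: hmode_basis_def not_in_iff)
      then show ?thesis
        unfolding step by simp
    qed
  qed simp
qed

lemma normal_apply_mono_neq_0_imp:
  assumes "normal_apply js (mono X) \<noteq> 0"
  shows "0 \<notin> set js \<and> mset (map nat (filter (\<lambda>j. 0 < j) js)) \<subseteq># X"
proof -
  define ps where "ps = filter (\<lambda>j. 0 \<le> j) js"
  have "foldr hmode ps (mono X) \<noteq> 0"
    using assms by (auto simp: normal_apply_def apply_modes_def ps_def)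
  then have ps: "0 \<notin> set ps" "mset (map nat ps) \<subseteq># X"
    using foldr_hmode_nonneg_mono[of ps X] by (auto simp: ps_def)
  then have "0 \<notin> set js"
    by (auto simp: ps_def)
  moreover from this have "filter (\<lambda>j. 0 < j) js = ps"
    unfolding ps_def by (metis filter_cong le_less)
  ultimately show ?thesis
    using ps by simp
qed

lemma vo_term_mono_neq_0_imp:
  assumes "length js = length ns" "sum_list js = N" "vo_term ns js (mono (mset x)) \<noteq> 0"
  shows "js \<in> set (mode_tuples ns N x (int (sum_list x)))"
proof -
  have "mode_coeff ns js \<noteq> 0" and "normal_apply js (mono (mset x)) \<noteq> 0"
    using assms(3) by (auto simp: vo_term_def smul_eq_0_iff)
  then have "list_all2 (\<lambda>n j. j < 0 \<longrightarrow> j \<le> - int n) ns js"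
    and "0 \<notin> set js \<and> mset (map nat (filter (\<lambda>j. 0 < j) js)) \<subseteq># mset x"
    using mode_coeff_num_neq_0_imp mode_coeff_eq[of ns js] assms(1) normal_apply_mono_neq_0_imp
    by auto
  then show ?thesis
    using mode_tuples_complete assms(1,2) by blast
qed

lemma vo_term_vec_of:
  "vo_term ns js (vec_of V)
     = sum_list (map (\<lambda>t. smul (of_int (snd t)) (vo_term ns js (mono (mset (fst t))))) V)"
  by (simp add: vo_term_def normal_apply_vec_of vec_of_normal_apply_rep smul_sum_list o_def
      case_prod_beta smul_smul mult.commute)

lemma vo_mono_mode_eq_sum:
  assumes "sorted ns" "finite T"
    and "\<forall>js\<in>T. length js = length ns \<and> sum_list js = n + 1 - int (sum_list ns)"
    and "\<And>js. length js = length ns \<Longrightarrow> sum_list js = n + 1 - int (sum_list ns) \<Longrightarrow>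
      vo_term ns js v \<noteq> 0 \<Longrightarrow> js \<in> T"
  shows "vo_mono_mode (mset ns) n v = (\<Sum>js\<in>T. vo_term ns js v)"
proof -
  let ?I = "{js. length js = length ns \<and> sum_list (map2 (\<lambda>a j. j + int a) ns js) = n + 1
    \<and> vo_term ns js v \<noteq> 0}"
  have weight: "sum_list (map2 (\<lambda>a j. j + int a) ns js) = sum_list js + int (sum_list ns)"
    if "length ns = length js" for js
    using that by (induction ns js rule: list_induct2) auto
  have "vo_mono_mode (mset ns) n v = (\<Sum>js\<in>?I. vo_term ns js v)"
    by (simp add: vo_mono_mode_def Let_def sorted_sort_id[OF assms(1)])
  also have "\<dots> = (\<Sum>js\<in>T. vo_term ns js v)"
  proof (rule sum.mono_neutral_left[OF assms(2)])
    show "?I \<subseteq> T"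
      using assms(4) weight by force
    show "\<forall>js\<in>T - ?I. vo_term ns js v = 0"
      using assms(3) weight by fastforce
  qed
  finally show ?thesis .
qed

definition vo_mode_rep_mono :: "nat list \<Rightarrow> int \<Rightarrow> nat list \<Rightarrow> rep" where
  "vo_mode_rep_mono ns n x = collect_rep (concat (map
     (\<lambda>js. scale_rep (mode_coeff_num ns js) (normal_apply_rep js [(x, 1)]))
     (mode_tuples ns (n + 1 - int (sum_list ns)) x (int (sum_list x)))))"

definition vo_mode_rep :: "nat list \<Rightarrow> int \<Rightarrow> rep \<Rightarrow> rep" where
  "vo_mode_rep ns n V = concat (map (\<lambda>(x, c). scale_rep c (vo_mode_rep_mono ns n x)) V)"

lemma vo_mono_mode_mono:
  assumes "sorted ns"
  shows "vo_mono_mode (mset ns) n (mono (mset x))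
    = smul (1 / of_int (mode_coeff_den ns)) (vec_of (vo_mode_rep_mono ns n x))"
proof -
  let ?tuples = "mode_tuples ns (n + 1 - int (sum_list ns)) x (int (sum_list x))"
  have "vo_mono_mode (mset ns) n (mono (mset x))
      = (\<Sum>js\<in>set ?tuples. vo_term ns js (mono (mset x)))"
    using assms mode_tuples_sound vo_term_mono_neq_0_imp by (intro vo_mono_mode_eq_sum) auto
  also have "\<dots> = sum_list (map (\<lambda>js. vo_term ns js (mono (mset x))) ?tuples)"
    by (simp add: sum_list_distinct_conv_sum_set distinct_mode_tuples)
  also have "\<dots> = sum_list (map (\<lambda>js. smul (1 / of_int (mode_coeff_den ns))
      (vec_of (scale_rep (mode_coeff_num ns js) (normal_apply_rep js [(x, 1)])))) ?tuples)"
  proof (rule arg_cong[where f = sum_list], rule map_cong[OF refl])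
    fix js
    assume "js \<in> set ?tuples"
    then have "length ns = length js"
      using mode_tuples_sound by simp
    then show "vo_term ns js (mono (mset x)) = smul (1 / of_int (mode_coeff_den ns))
        (vec_of (scale_rep (mode_coeff_num ns js) (normal_apply_rep js [(x, 1)])))"
      by (simp add: vo_term_def mode_coeff_eq vec_of_scale_rep smul_smul
          flip: vec_of_single normal_apply_vec_of)
  qed
  also have "\<dots> = smul (1 / of_int (mode_coeff_den ns)) (vec_of (vo_mode_rep_mono ns n x))"
    by (simp add: vo_mode_rep_mono_def vec_of_collect_rep vec_of_concat smul_sum_list o_def)
  finally show ?thesis .
qed

lemma sum_sum_list_swap:
  "(\<Sum>t\<in>T. sum_list (map (\<lambda>e. f e t) V)) = sum_list (map (\<lambda>e. \<Sum>t\<in>T. f e t) V)"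
  for f :: "'e \<Rightarrow> 't \<Rightarrow> 'a::comm_monoid_add"
  by (induction V) (simp_all add: sum.distrib)

lemma vo_term_vec_of_neq_0_imp:
  assumes "vo_term ns js (vec_of V) \<noteq> 0"
  shows "\<exists>t\<in>set V. vo_term ns js (mono (mset (fst t))) \<noteq> 0"
proof (rule ccontr)
  assume "\<not> ?thesis"
  then have "vo_term ns js (vec_of V) = sum_list (map (\<lambda>t. 0) V)"
    unfolding vo_term_vec_of by (intro arg_cong[where f = sum_list] map_cong) auto
  with assms show False
    by simp
qed

lemma vo_mono_mode_vec_of:
  assumes "sorted ns"
  shows "vo_mono_mode (mset ns) n (vec_of V)
    = smul (1 / of_int (mode_coeff_den ns)) (vec_of (vo_mode_rep ns n V))"
proof -
  let ?N = "n + 1 - int (sum_list ns)"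
  define T where "T = (\<Union>t\<in>set V. set (mode_tuples ns ?N (fst t) (int (sum_list (fst t)))))"
  have T_sound: "\<forall>js\<in>T. length js = length ns \<and> sum_list js = ?N"
    using mode_tuples_sound by (auto simp: T_def)
  have T_complete: "js \<in> T"
    if "t \<in> set V" "length js = length ns" "sum_list js = ?N"
      and "vo_term ns js (mono (mset (fst t))) \<noteq> 0" for t js
    unfolding T_def using that(1) vo_term_mono_neq_0_imp[OF that(2-4)] by blast
  have "vo_mono_mode (mset ns) n (vec_of V) = (\<Sum>js\<in>T. vo_term ns js (vec_of V))"
  proof (rule vo_mono_mode_eq_sum[OF assms _ T_sound])
    fix js
    assume "length js = length ns" "sum_list js = ?N" "vo_term ns js (vec_of V) \<noteq> 0"
    then show "js \<in> T"
      using T_complete vo_term_vec_of_neq_0_imp by blast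
  qed (simp add: T_def)
  also have "\<dots> = sum_list (map (\<lambda>t. smul (of_int (snd t))
      (\<Sum>js\<in>T. vo_term ns js (mono (mset (fst t))))) V)"
    by (simp add: vo_term_vec_of sum_sum_list_swap smul_sum)
  also have "\<dots> = sum_list (map (\<lambda>t. smul (of_int (snd t))
      (vo_mono_mode (mset ns) n (mono (mset (fst t))))) V)"
  proof (rule arg_cong[where f = sum_list], rule map_cong[OF refl])
    fix t
    assume "t \<in> set V"
    then have "vo_mono_mode (mset ns) n (mono (mset (fst t)))
        = (\<Sum>js\<in>T. vo_term ns js (mono (mset (fst t))))"
      using T_sound T_complete by (intro vo_mono_mode_eq_sum[OF assms]) (auto simp: T_def)
    then show "smul (of_int (snd t)) (\<Sum>js\<in>T. vo_term ns js (mono (mset (fst t))))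
        = smul (of_int (snd t)) (vo_mono_mode (mset ns) n (mono (mset (fst t))))"
      by simp
  qed
  also have "\<dots> = smul (1 / of_int (mode_coeff_den ns)) (vec_of (vo_mode_rep ns n V))"
    by (simp add: vo_mono_mode_mono[OF assms] vo_mode_rep_def vec_of_concat smul_sum_list o_def
        vec_of_scale_rep smul_smul mult.commute case_prod_beta)
  finally show ?thesis .
qed

section \<open>Zhu's products and O(V)\<close>

definition zhu_mono :: "int \<Rightarrow> nat multiset \<Rightarrow> vec \<Rightarrow> vec" where
  "zhu_mono d m v =
     (\<Sum>i\<le>sum_mset m. smul (of_nat (sum_mset m choose i)) (vo_mono_mode m (int i - d) v))"

lemma zstar_eq_lin_ext: "zstar u v = lin_ext (\<lambda>m. zhu_mono 1 m v) u"
  by (simp add: zstar_def lin_ext_def zhu_mono_def)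

lemma zcirc_eq_lin_ext: "zcirc u v = lin_ext (\<lambda>m. zhu_mono 2 m v) u"
  by (simp add: zcirc_def lin_ext_def zhu_mono_def)

lemma zhu_mono_smul: "zhu_mono d m (smul c v) = smul c (zhu_mono d m v)"
  by (simp add: zhu_mono_def vo_mono_mode_smul smul_sum smul_smul mult.commute)

lemma lin_ext_smul_fun: "lin_ext (\<lambda>m. smul c (F m)) v = smul c (lin_ext F v)"
  by (simp add: lin_ext_def smul_sum smul_smul mult.commute)

definition zhu_mono_rep :: "int \<Rightarrow> nat list \<Rightarrow> rep \<Rightarrow> rep" where
  "zhu_mono_rep d ns V = concat (map
     (\<lambda>i. scale_rep (int (sum_list ns choose i)) (vo_mode_rep (sort ns) (int i - d) V))
     [0..<Suc (sum_list ns)])"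

lemma zhu_mono_vec_of:
  "zhu_mono d (mset ns) (vec_of V)
     = smul (1 / of_int (mode_coeff_den (sort ns))) (vec_of (zhu_mono_rep d ns V))"
proof -
  let ?w = "sum_list ns" and ?d = "1 / of_int (mode_coeff_den (sort ns))"
  have "zhu_mono d (mset ns) (vec_of V) = (\<Sum>i\<in>{..?w}. smul (of_nat (?w choose i))
      (vo_mono_mode (mset (sort ns)) (int i - d) (vec_of V)))"
    by (simp add: zhu_mono_def sum_mset_sum_list)
  also have "\<dots> = (\<Sum>i\<in>{..?w}. smul (of_nat (?w choose i))
      (smul ?d (vec_of (vo_mode_rep (sort ns) (int i - d) V))))"
    by (simp only: vo_mono_mode_vec_of[OF sorted_sort])
  also have "\<dots> = smul ?d (vec_of (zhu_mono_rep d ns V))"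
    unfolding atMost_upto sum_set_upt_conv_sum_list_nat
    by (simp add: zhu_mono_rep_def vec_of_concat vec_of_scale_rep smul_sum_list smul_smul o_def
        mult.commute atMost_upto del: upt_Suc)
  finally show ?thesis .
qed

definition zhu_den :: "rep \<Rightarrow> int" where
  "zhu_den U = Lcm ((\<lambda>t. mode_coeff_den (sort (fst t))) ` set U)"

lemma zhu_den_neq_0: "zhu_den U \<noteq> 0"
proof -
  have "0 \<notin> (\<lambda>t. mode_coeff_den (sort (fst t))) ` set U"
    using mode_coeff_den_pos by (metis imageE less_irrefl)
  then show ?thesis
    by (simp add: zhu_den_def Lcm_0_iff)
qed

definition zhu_rep :: "int \<Rightarrow> rep \<Rightarrow> rep \<Rightarrow> rep" where
  "zhu_rep d U V = collect_rep (concat (map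
     (\<lambda>(ns, c). scale_rep (c * (zhu_den U div mode_coeff_den (sort ns))) (zhu_mono_rep d ns V)) U))"

lemma lin_ext_zhu_mono_vec_of:
  "lin_ext (\<lambda>m. zhu_mono d m (vec_of V)) (vec_of U)
     = smul (1 / of_int (zhu_den U)) (vec_of (zhu_rep d U V))"
proof -
  have "lin_ext (\<lambda>m. zhu_mono d m (vec_of V)) (vec_of U)
      = sum_list (map (\<lambda>(ns, c). smul (of_int c) (zhu_mono d (mset ns) (vec_of V))) U)"
    by (rule lin_ext_vec_of)
  also have "\<dots> = sum_list (map (\<lambda>(ns, c). smul (1 / of_int (zhu_den U))
      (vec_of (scale_rep (c * (zhu_den U div mode_coeff_den (sort ns))) (zhu_mono_rep d ns V)))) U)"
  proof (rule arg_cong[where f = sum_list], rule map_cong[OF refl], clarify)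
    fix ns c
    assume "(ns, c) \<in> set U"
    then have "mode_coeff_den (sort ns) dvd zhu_den U"
      by (force simp: zhu_den_def intro: dvd_Lcm)
    then have "of_int (zhu_den U div mode_coeff_den (sort ns))
        = (of_int (zhu_den U) / of_int (mode_coeff_den (sort ns)) :: complex)"
      by (simp add: of_int_div)
    then show "smul (of_int c) (zhu_mono d (mset ns) (vec_of V)) = smul (1 / of_int (zhu_den U))
        (vec_of (scale_rep (c * (zhu_den U div mode_coeff_den (sort ns))) (zhu_mono_rep d ns V)))"
      using zhu_den_neq_0[of U] mode_coeff_den_pos[of "sort ns"]
      by (simp add: zhu_mono_vec_of vec_of_scale_rep smul_smul)
  qed
  also have "\<dots> = smul (1 / of_int (zhu_den U)) (vec_of (zhu_rep d U V))"
    by (simp add: zhu_rep_def vec_of_collect_rep vec_of_concat smul_sum_list o_def case_prod_unfold)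
  finally show ?thesis .
qed

definition frac_vec :: "int \<Rightarrow> rep \<Rightarrow> vec" where
  "frac_vec D xs = smul (1 / of_int D) (vec_of xs)"

lemma zstar_frac_vec:
  "zstar (frac_vec a U) (frac_vec b V) = frac_vec (a * b * zhu_den U) (zhu_rep 1 U V)"
  by (simp add: frac_vec_def zstar_eq_lin_ext zhu_mono_smul lin_ext_smul_fun lin_ext_smul
      lin_ext_zhu_mono_vec_of smul_smul mult_ac)

lemma zcirc_mono_mono:
  "zcirc (mono (mset u)) (mono (mset v))
     = smul (1 / of_int (zhu_den [(u, 1)])) (vec_of (zhu_rep 2 [(u, 1)] [(v, 1)]))"
  by (simp add: zcirc_eq_lin_ext lin_ext_zhu_mono_vec_of flip: vec_of_single)

lemma frac_vec_add:
  "a \<noteq> 0 \<Longrightarrow> b \<noteq> 0 \<Longrightarrow>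
     frac_vec a xs + frac_vec b ys = frac_vec (a * b) (scale_rep b xs @ scale_rep a ys)"
  by (simp add: frac_vec_def vec_of_append vec_of_scale_rep smul_def fun_eq_iff field_simps)

lemma frac_vec_diff:
  "a \<noteq> 0 \<Longrightarrow> b \<noteq> 0 \<Longrightarrow>
     frac_vec a xs - frac_vec b ys = frac_vec (a * b) (scale_rep b xs @ scale_rep (- a) ys)"
  by (simp add: frac_vec_def vec_of_append vec_of_scale_rep smul_def fun_eq_iff field_simps)

lemma smul_frac_vec:
  assumes "quotient_of r = (p, q)"
  shows "smul (of_rat r) (frac_vec a xs) = frac_vec (q * a) (scale_rep p xs)"
proof -
  have "of_rat r = (of_int p / of_int q :: complex)"
    using quotient_of_div[OF assms] by (simp add: of_rat_divide)
  then show ?thesis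
    by (simp add: frac_vec_def vec_of_scale_rep smul_smul)
qed

lemma OV_smul: "x \<in> OV \<Longrightarrow> smul c x \<in> OV"
proof (induction rule: OV.induct)
  case zero
  show ?case
    using OV.zero by (simp only: smul_zero)
next
  case (step x u v c')
  then have "smul c x + smul (c * c') (zcirc u v) \<in> OV"
    by (intro OV.step)
  then have "smul c (x + smul c' (zcirc u v)) \<in> OV"
    by (simp only: smul_add smul_smul)
  \<comment> \<open>the induction rule of OV states this case with the sum eta-expanded\<close>
  then show ?case
    unfolding plus_fun_def .
qed

definition even_monomial :: "nat list \<Rightarrow> bool" where
  "even_monomial ns \<longleftrightarrow> 0 \<notin> set ns \<and> even (length ns)"

lemma mono_in_M1plus: "even_monomial ns \<Longrightarrow> mono (mset ns) \<in> M1plus"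
  by (auto simp: even_monomial_def M1plus_def M1_def theta_def mono_def supp_def fun_eq_iff)

definition circ_comb :: "(nat list \<times> nat list \<times> int) list \<Rightarrow> rep" where
  "circ_comb L = concat (map (\<lambda>(u, v, k). scale_rep k (zhu_rep 2 [(u, 1)] [(v, 1)])) L)"

lemma circ_comb_in_OV:
  "\<forall>(u, v, k)\<in>set L. even_monomial u \<and> even_monomial v \<Longrightarrow> vec_of (circ_comb L) \<in> OV"
proof (induction L)
  case Nil
  have "vec_of (circ_comb []) = 0"
    by (simp add: circ_comb_def)
  with OV.zero show ?case
    by (simp only:)
next
  case (Cons t L)
  obtain u v k where t: "t = (u, v, k)"
    by (cases t)
  let ?c = "of_int k * of_int (zhu_den [(u, 1)])"
  have "vec_of (circ_comb L) + smul ?c (zcirc (mono (mset u)) (mono (mset v))) \<in> OV"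
    using Cons by (intro OV.step) (auto simp: t mono_in_M1plus homogeneous_def)
  moreover have "vec_of (circ_comb (t # L))
      = vec_of (circ_comb L) + smul ?c (zcirc (mono (mset u)) (mono (mset v)))"
    using zhu_den_neq_0[of "[(u, 1)]"]
    by (simp add: t circ_comb_def vec_of_append vec_of_scale_rep zcirc_mono_mono smul_smul
        add.commute)
  ultimately show ?case
    by (simp only:)
qed

section \<open>Evaluation of expressions in vac, omega and J\<close>

datatype vexpr =
  EVac | EOmega | EJ | EAdd vexpr vexpr | EDiff vexpr vexpr | EScale rat vexpr | EStar vexpr vexpr

primrec vexpr_vec :: "vexpr \<Rightarrow> vec" where
  "vexpr_vec EVac = vac"
| "vexpr_vec EOmega = omega"
| "vexpr_vec EJ = Jvec"
| "vexpr_vec (EAdd a b) = vexpr_vec a + vexpr_vec b"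
| "vexpr_vec (EDiff a b) = vexpr_vec a - vexpr_vec b"
| "vexpr_vec (EScale r a) = smul (of_rat r) (vexpr_vec a)"
| "vexpr_vec (EStar a b) = zstar (vexpr_vec a) (vexpr_vec b)"

primrec vexpr_rep :: "vexpr \<Rightarrow> int \<times> rep" where
  "vexpr_rep EVac = (1, [([], 1)])"
| "vexpr_rep EOmega = (2, [([1, 1], 1)])"
| "vexpr_rep EJ = (2, [([1, 1, 1, 1], 2), ([1, 3], -4), ([2, 2], 3)])"
| "vexpr_rep (EAdd a b) = (case (vexpr_rep a, vexpr_rep b) of ((Da, xs), (Db, ys)) \<Rightarrow>
     (Da * Db, scale_rep Db xs @ scale_rep Da ys))"
| "vexpr_rep (EDiff a b) = (case (vexpr_rep a, vexpr_rep b) of ((Da, xs), (Db, ys)) \<Rightarrow>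
     (Da * Db, scale_rep Db xs @ scale_rep (- Da) ys))"
| "vexpr_rep (EScale r a) = (case (quotient_of r, vexpr_rep a) of ((p, q), (Da, xs)) \<Rightarrow>
     (q * Da, scale_rep p xs))"
| "vexpr_rep (EStar a b) = (case (vexpr_rep a, vexpr_rep b) of ((Da, xs), (Db, ys)) \<Rightarrow>
     (Da * Db * zhu_den xs, zhu_rep 1 xs ys))"

lemma vexpr_rep_sound:
  "fst (vexpr_rep e) \<noteq> 0 \<and> vexpr_vec e = frac_vec (fst (vexpr_rep e)) (snd (vexpr_rep e))"
proof (induction e)
  case EVac
  show ?case
    by (simp add: vac_def frac_vec_def vec_of_single)
next
  case EOmega
  show ?case
    by (simp add: omega_def frac_vec_def vec_of_single)
next
  case EJ
  have "{#3, 1#} = mset [1, 3::nat]"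
    by (simp add: add_mset_commute)
  then show ?case
    by (simp add: Jvec_def frac_vec_def vec_of_Cons smul_def mono_def fun_eq_iff)
next
  case (EAdd a b)
  then show ?case
    by (auto simp: frac_vec_add split: prod.splits)
next
  case (EDiff a b)
  then show ?case
    by (auto simp: frac_vec_diff split: prod.splits)
next
  case (EScale r a)
  then show ?case
    using quotient_of_denom_pos by (fastforce simp: smul_frac_vec split: prod.splits)
next
  case (EStar a b)
  then show ?case
    by (auto simp: zstar_frac_vec zhu_den_neq_0 split: prod.splits)
qed

text \<open>Matching on the pair, rather than using fst and snd, makes evaluation compute the
  representation only once.\<close>

fun certifies_OV :: "int \<Rightarrow> (nat list \<times> nat list \<times> int) list \<Rightarrow> int \<times> rep \<Rightarrow> bool" where
  "certifies_OV c L (D, xs) \<longleftrightarrow> collect_rep (scale_rep c xs @ scale_rep (- D) (circ_comb L)) = []"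

lemma vexpr_vec_in_OV:
  assumes "\<forall>(u, v, k)\<in>set L. even_monomial u \<and> even_monomial v" and "c \<noteq> 0"
    and "certifies_OV c L (vexpr_rep e)"
  shows "vexpr_vec e \<in> OV"
proof -
  obtain D xs where rep: "vexpr_rep e = (D, xs)"
    by fastforce
  then have "D \<noteq> 0" and val: "vexpr_vec e = frac_vec D xs"
    using vexpr_rep_sound[of e] by auto
  have "vec_of (scale_rep c xs @ scale_rep (- D) (circ_comb L)) = 0"
    using assms(3) rep vec_of_collect_rep by (metis certifies_OV.simps vec_of_Nil)
  then have "of_int c * vec_of xs m = of_int D * vec_of (circ_comb L) m" for m
    by (simp add: vec_of_append vec_of_scale_rep smul_def fun_eq_iff)
  with \<open>D \<noteq> 0\<close> assms(2) have "vexpr_vec e = smul (1 / of_int c) (vec_of (circ_comb L))"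
    by (simp add: val frac_vec_def smul_def fun_eq_iff field_simps)
  then show ?thesis
    using circ_comb_in_OV[OF assms(1)] by (simp add: OV_smul)
qed

definition w2_expr :: vexpr where
  "w2_expr = EStar EOmega EOmega"

definition w3_expr :: vexpr where
  "w3_expr = EStar w2_expr EOmega"

definition w4_expr :: vexpr where
  "w4_expr = EStar w3_expr EOmega"

definition J_square_relation :: vexpr where
  "J_square_relation =
     EDiff (EDiff (EStar EJ EJ)
       (EDiff (EAdd (EDiff (EScale (1816/35) w4_expr) (EScale (212/5) w3_expr))
          (EScale (89/10) w2_expr)) (EScale (27/70) EOmega)))
     (EStar (EDiff (EAdd (EScale (-314/35) w2_expr) (EScale (89/14) EOmega)) (EScale (27/70) EVac))
       EJ)"

definition factored_relation :: vexpr where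
  "factored_relation =
     EStar (EDiff (EAdd EJ EOmega) (EScale 4 w2_expr))
       (EAdd (EDiff (EAdd (EScale 70 EJ) (EScale 908 w2_expr)) (EScale 515 EOmega))
         (EScale 27 EVac))"

definition J_square_certificate :: "(nat list \<times> nat list \<times> int) list" where
  "J_square_certificate =
     [([1, 1], [], -3159720), ([2, 2], [], -5226498), ([1, 2], [], -13062888),
      ([1, 3], [], -5040684), ([1, 1], [1, 2], -2584338), ([1, 1], [1, 1], -51406020),
      ([1, 2], [1, 1], -20721628), ([1, 4], [], -489120), ([1, 1], [1, 3], 46930104),
      ([1, 3], [1, 1], -1461470), ([2, 2], [1, 1], -859721), ([2, 2], [1, 1, 1, 1], -958554),
      ([1, 2], [1, 1, 1, 1], 40005336), ([2, 2], [1, 3], 7956522), ([1, 2], [1, 3], 224003064),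
      ([1, 3], [1, 2], 23654142), ([1, 1], [2, 2], -30101514), ([1, 2], [1, 2], 197482884),
      ([1, 1], [1, 1, 1, 2], -60378324), ([1, 1], [2, 3], -48757920), ([2, 2], [1, 2], 31019283),
      ([1, 1], [3, 3], 14854968), ([1, 3], [1, 3], 4724676), ([1, 1], [1, 1, 1, 3], -42176376),
      ([1, 2], [1, 4], 112355100), ([1, 1], [1, 4], -16616538), ([1, 1], [1, 5], -44093484),
      ([1, 1], [1, 1, 2, 2], -22046742), ([1, 2], [1, 1, 1, 2], 44093484),
      ([1, 3], [2, 2], 7348914), ([1, 1], [2, 4], -34130808), ([1, 2], [2, 3], -35492688),
      ([2, 2], [2, 2], 5198715), ([1, 2], [2, 2], -7525260), ([2, 3], [], -1370160),
      ([1, 1], [1, 1, 1, 1], -7222920), ([1, 1, 1, 1], [1, 2], -3461940),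
      ([1, 4], [1, 1], -109980)]"

definition factored_certificate :: "(nat list \<times> nat list \<times> int) list" where
  "factored_certificate =
     [([1, 1], [], -944280), ([2, 2], [], -522222), ([1, 2], [], -6543192),
      ([1, 3], [], -3395076), ([1, 1], [1, 2], -153228382), ([1, 1], [1, 1], -344140),
      ([1, 2], [1, 1], -39657252), ([1, 4], [], -291600), ([1, 1], [1, 3], -186717144),
      ([1, 3], [1, 1], -21912930), ([2, 2], [1, 1], -17797959), ([2, 2], [1, 1, 1, 1], 2671434),
      ([1, 2], [1, 1, 1, 1], -117685656), ([2, 2], [1, 3], -22174362),
      ([1, 2], [1, 3], -609477624), ([1, 3], [1, 2], -59654142), ([1, 1], [2, 2], 121075914),
      ([1, 2], [1, 2], -406299684), ([1, 1], [1, 1, 1, 2], 176768244),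
      ([1, 1], [2, 3], 163785600), ([2, 2], [1, 2], -60868323), ([1, 1], [3, 3], -41399928),
      ([1, 3], [1, 3], -13167396), ([1, 1], [1, 1, 1, 3], 117543096),
      ([1, 2], [1, 4], -313127100), ([1, 1], [1, 4], 91288458), ([1, 1], [1, 5], 122885964),
      ([1, 1], [1, 1, 2, 2], 61442982), ([1, 2], [1, 1, 1, 2], -122885964),
      ([1, 3], [2, 2], -20480994), ([1, 1], [2, 4], 95120568), ([1, 2], [2, 3], 98916048),
      ([2, 2], [2, 2], -14488515), ([1, 2], [2, 2], 58672620), ([2, 3], [], -276480),
      ([1, 1], [1, 1, 1, 1], -83160), ([1, 1, 1, 1], [1, 2], -173340), ([1, 4], [1, 1], -472500)]"

lemma J_square_relation_in_OV: "vexpr_vec J_square_relation \<in> OV"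
  by (rule vexpr_vec_in_OV[where c = 33600 and L = J_square_certificate]) code_simp+

lemma factored_relation_in_OV: "vexpr_vec factored_relation \<in> OV"
  by (rule vexpr_vec_in_OV[where c = 160 and L = factored_certificate]) code_simp+

theorem proposition4p1:
  defines "w2 \<equiv> zstar omega omega"
      and "w3 \<equiv> zstar (zstar omega omega) omega"
      and "w4 \<equiv> zstar (zstar (zstar omega omega) omega) omega"
  shows "zstar Jvec Jvec
           - (smul (1816/35) w4 - smul (212/5) w3 + smul (89/10) w2 - smul (27/70) omega)
           - zstar (smul (-314/35) w2 + smul (89/14) omega - smul (27/70) vac) Jvec
         \<in> OV \<and>
         zstar (Jvec + omega - smul 4 w2)
               (smul 70 Jvec + smul 908 w2 - smul 515 omega + smul 27 vac) \<in> OV"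
  using J_square_relation_in_OV factored_relation_in_OV
  by (simp add: J_square_relation_def factored_relation_def w2_expr_def w3_expr_def w4_expr_def
      w2_def w3_def w4_def of_rat_divide of_rat_minus)

end
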